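(* Let $n\in\mathbb N$, $n\ge 2$, let $t\in[a,b]$ and let $f_j:[a,b]\to\mathbb F$, $j=1,\dots,n$, be $g$-differentiable at $t$. Then the product $\prod_{j=1}^n f_j$ is $g$-differentiable at $t$ and \[\Big(\prod_{j=1}^nf_j\Big)_g'(t)=\sum_{k=0}^{n-1}(\Delta g(t^* ))^k\Big(\sum_{\sigma\in F_{n,k+1}}\prod_{j=1}^n(f_j)^{(\sigma_j)}_g(t^* )\Big),\] where the factor $(\Delta g(t^* ))^0$ is interpreted as $1$.
   Context: Let $g:\mathbb R\to\mathbb R$ be nondecreasing and left-continuous, and $\mathbb F\in\{\mathbb R,\mathbb C\}$. For $t\in\mathbb R$ let $\Delta g(t)=g(t^+)-g(t)$, where $g(t^+)$ is the right-hand limit. Let $D_g=\{t\in\mathbb R:\Delta g(t)>0\}$ and $C_g=\{t\in\mathbb R: g \text{ is constant on }(t-\varepsilon,t+\varepsilon)\text{ for some }\varepsilon>0\}$; $C_g$ is open and is uniquely written as a countable union of pairwise disjoint open intervals $C_g=\bigcup_{n\in\Lambda}(a_n,b_n)$ (its connected components). Let $N_g^-=\{a_n:n\in\Lambda\}\setminus D_g$, $N_g^+=\{b_n:n\in\Lambda\}\setminus D_g$, $N_g=N_g^-\cup N_g^+$. Fix $a<b$ with $a\notin N_g^-$ and $b\notin D_g\cup C_g\cup N_g^+$. For $t\in[a,b]$ put $t^*=t$ if $t\notin C_g$ and $t^*=b_n$ if $t\in(a_n,b_n)$. The $g$-derivative of $f:[a,b]\to\mathbb F$ at $t\in[a,b]$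 is $f'_g(t)=\lim_{s\to t}\frac{f(s)-f(t)}{g(s)-g(t)}$ if $t\notin D_g\cup C_g$, and $f'_g(t)=\lim_{s\to t^{*+}}\frac{f(s)-f(t^* )}{g(s)-g(t^* )}$ if $t\in D_g\cup C_g$, provided the (finite) limit exists, in which case $f$ is called $g$-differentiable at $t$; the limits are over $s\in[a,b]$ with $g(s)$ different from the value in the denominator, and at points of $N_g^+\cup\{a\}$ only the right-hand limit is taken while at points of $N_g^-\cup\{b\}$ only the left-hand limit is taken. Notation: $f^{(0)}_g=f$, $f^{(1)}_g=f'_g$; for $\sigma=(\sigma_1,\dots,\sigma_n)\in\{0,1\}^n$, $|\sigma|$ is the number of indices $j$ with $\sigma_j=1$, and $F_{n,k}=\{\sigma\in\{0,1\}^n:|\sigma|=k\}$. *)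

theory Defs
  imports "HOL-Analysis.Analysis"
begin

text \<open>Stieltjes (g-)derivatives. Here g :: real => real is the derivator,
  [a,b] the working interval; functions f are considered on [a,b] only
  (all limits are taken within [a,b]).\<close>

definition gplus :: "(real \<Rightarrow> real) \<Rightarrow> real \<Rightarrow> real" where
  "gplus g t = Lim (at_right t) g"

definition Delta_g :: "(real \<Rightarrow> real) \<Rightarrow> real \<Rightarrow> real" where
  "Delta_g g t = gplus g t - g t"

definition Dg :: "(real \<Rightarrow> real) \<Rightarrow> real set" where
  "Dg g = {t. Delta_g g t > 0}"

definition Cg :: "(real \<Rightarrow> real) \<Rightarrow> real set" where
  "Cg g = {t. \<exists>e>0. \<forall>s\<in>{t-e<..<t+e}. g s = g t}"

text \<open>Left endpoints a_n (resp. right endpoints b_n) of the connected components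
  (a_n,b_n) of C_g, minus D_g.\<close>
definition Ngm :: "(real \<Rightarrow> real) \<Rightarrow> real set" where
  "Ngm g = {x. x \<notin> Cg g \<and> (\<exists>y>x. {x<..<y} \<subseteq> Cg g)} - Dg g"

definition Ngp :: "(real \<Rightarrow> real) \<Rightarrow> real set" where
  "Ngp g = {y. y \<notin> Cg g \<and> (\<exists>x<y. {x<..<y} \<subseteq> Cg g)} - Dg g"

text \<open>t* : t itself if t is not in C_g, otherwise the right endpoint of the
  component of C_g containing t.\<close>
definition tstar :: "(real \<Rightarrow> real) \<Rightarrow> real \<Rightarrow> real" where
  "tstar g t = (if t \<in> Cg g then Inf {s. t \<le> s \<and> s \<notin> Cg g} else t)"

definition has_g_deriv ::
  "(real \<Rightarrow> real) \<Rightarrow> real \<Rightarrow> real \<Rightarrow> (real \<Rightarrow> 'a::real_normed_field) \<Rightarrow> 'a \<Rightarrow> real \<Rightarrow> bool" where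
  "has_g_deriv g a b f L t =
    (if t \<in> Dg g \<union> Cg g then
       ((\<lambda>s. (f s - f (tstar g t)) / of_real (g s - g (tstar g t))) \<longlongrightarrow> L)
         (at (tstar g t) within ({s\<in>{a..b}. g s \<noteq> g (tstar g t)} \<inter> {tstar g t<..}))
     else
       ((\<lambda>s. (f s - f t) / of_real (g s - g t)) \<longlongrightarrow> L)
         (at t within ({s\<in>{a..b}. g s \<noteq> g t} \<inter>
            (if t \<in> Ngp g \<union> {a} then {t<..}
             else if t \<in> Ngm g \<union> {b} then {..<t} else UNIV))))"

definition g_differentiable ::
  "(real \<Rightarrow> real) \<Rightarrow> real \<Rightarrow> real \<Rightarrow> (real \<Rightarrow> 'a::real_normed_field) \<Rightarrow> real \<Rightarrow> bool" where
  "g_differentiable g a b f t = (\<exists>L. has_g_deriv g a b f L t)"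

definition g_deriv ::
  "(real \<Rightarrow> real) \<Rightarrow> real \<Rightarrow> real \<Rightarrow> (real \<Rightarrow> 'a::real_normed_field) \<Rightarrow> real \<Rightarrow> 'a" where
  "g_deriv g a b f t = (THE L. has_g_deriv g a b f L t)"

definition g_deriv_n ::
  "(real \<Rightarrow> real) \<Rightarrow> real \<Rightarrow> real \<Rightarrow> (real \<Rightarrow> 'a::real_normed_field) \<Rightarrow> nat \<Rightarrow> real \<Rightarrow> 'a" where
  "g_deriv_n g a b f i = (if i = 0 then f else g_deriv g a b f)"

definition Fnk :: "nat \<Rightarrow> nat \<Rightarrow> (nat \<Rightarrow> nat) set" where
  "Fnk n k = {\<sigma> \<in> {1..n} \<rightarrow>\<^sub>E {0,1}. card {j\<in>{1..n}. \<sigma> j = 1} = k}"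

end

theory Submission
  imports Defs
begin

(*
  Write T = t* and q_j(s) = (f_j s - f_j T) / (g s - g T). Along the filter in the definition of
  the g-derivative at t we have f_j s = f_j T + (g s - g T) q_j(s), so expanding the product over
  the nonempty sets S of indices taken from the second summand gives
    (\<Prod> f_j s - \<Prod> f_j T) / (g s - g T)
      = \<Sum>_S (g s - g T)^(|S|-1) \<Prod>_{j\<in>S} q_j(s) \<Prod>_{j\<notin>S} f_j T.
  Here q_j(s) tends to (f_j)'_g(T) and g s - g T tends to \<Delta>g(T): this is the right limit of g at
  T on D_g \<union> C_g, and off D_g \<union> C_g the function g is continuous at t = T, where \<Delta>g vanishes.
  Grouping the sets S by cardinality and encoding S by its indicator \<sigma> gives the formula. The
  conditions on a and b make that filter nontrivial, so that g-derivatives are unique and the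
  g-derivative at t is the one at t*.
*)

subsection \<open>Difference quotients of products\<close>

lemma prod_add_mult_diff:
  fixes c x :: "'b \<Rightarrow> 'a::comm_ring_1"
  assumes "finite A"
  shows "(\<Prod>j\<in>A. c j + d * x j) - (\<Prod>j\<in>A. c j) =
    d * (\<Sum>S\<in>Pow A - {{}}. d ^ (card S - 1) * (\<Prod>j\<in>S. x j) * (\<Prod>j\<in>A - S. c j))"
proof -
  have nonempty: "d ^ card S = d * d ^ (card S - 1)" if "S \<in> Pow A - {{}}" for S
    using that assms by (metis DiffE PowD card_0_eq finite_subset insertI1 power_eq_if)
  have "(\<Prod>j\<in>A. c j + d * x j) = (\<Sum>S\<in>Pow A. (\<Prod>j\<in>S. d * x j) * (\<Prod>j\<in>A - S. c j))"
    using prod_add[OF assms, of "\<lambda>j. d * x j" c] by (simp add: add.commute)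
  also have "\<dots> = (\<Prod>j\<in>A. c j) + (\<Sum>S\<in>Pow A - {{}}. d ^ card S * (\<Prod>j\<in>S. x j) * (\<Prod>j\<in>A - S. c j))"
    using assms by (subst sum.remove[of _ "{}"]) (auto simp: prod.distrib)
  also have "(\<Sum>S\<in>Pow A - {{}}. d ^ card S * (\<Prod>j\<in>S. x j) * (\<Prod>j\<in>A - S. c j)) =
      d * (\<Sum>S\<in>Pow A - {{}}. d ^ (card S - 1) * (\<Prod>j\<in>S. x j) * (\<Prod>j\<in>A - S. c j))"
    unfolding sum_distrib_left by (rule sum.cong[OF refl]) (simp add: nonempty mult.assoc)
  finally show ?thesis by simp
qed

lemma tendsto_prod_difference_quotient:
  fixes f :: "'i \<Rightarrow> 'b \<Rightarrow> 'a::real_normed_field"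
  assumes "finite A"
    and quotients: "\<And>j. j \<in> A \<Longrightarrow> ((\<lambda>s. (f j s - c j) / D s) \<longlongrightarrow> L j) F"
    and "(D \<longlongrightarrow> \<Delta>) F" "\<forall>\<^sub>F s in F. D s \<noteq> 0"
  shows "((\<lambda>s. ((\<Prod>j\<in>A. f j s) - (\<Prod>j\<in>A. c j)) / D s) \<longlongrightarrow>
     (\<Sum>S\<in>Pow A - {{}}. \<Delta> ^ (card S - 1) * (\<Prod>j\<in>S. L j) * (\<Prod>j\<in>A - S. c j))) F"
proof -
  define q where "q j s = (f j s - c j) / D s" for j s
  have "((\<lambda>s. \<Sum>S\<in>Pow A - {{}}. D s ^ (card S - 1) * (\<Prod>j\<in>S. q j s) * (\<Prod>j\<in>A - S. c j)) \<longlongrightarrow>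
     (\<Sum>S\<in>Pow A - {{}}. \<Delta> ^ (card S - 1) * (\<Prod>j\<in>S. L j) * (\<Prod>j\<in>A - S. c j))) F"
    unfolding q_def using quotients
    by (intro tendsto_sum tendsto_mult tendsto_power tendsto_prod assms(3) tendsto_const) auto
  moreover have "\<forall>\<^sub>F s in F.
      (\<Sum>S\<in>Pow A - {{}}. D s ^ (card S - 1) * (\<Prod>j\<in>S. q j s) * (\<Prod>j\<in>A - S. c j)) =
      ((\<Prod>j\<in>A. f j s) - (\<Prod>j\<in>A. c j)) / D s"
    using assms(4)
  proof eventually_elim
    case (elim s)
    then have "f j s = c j + D s * q j s" for j by (simp add: q_def)
    then show ?case
      using prod_add_mult_diff[OF assms(1), of c "D s" "\<lambda>j. q j s"] elim by simp
  qed
  ultimately show ?thesis by (rule Lim_transform_eventually)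
qed

subsection \<open>Tuples in {0,1}^n as subsets\<close>

lemma prod_split_zero_one:
  assumes "finite A" "\<sigma> \<in> A \<rightarrow> {0, 1}"
  shows "(\<Prod>j\<in>A. h j (\<sigma> j)) = (\<Prod>j\<in>{j\<in>A. \<sigma> j = 1}. h j 1) * (\<Prod>j\<in>A - {j\<in>A. \<sigma> j = 1}. h j 0)"
proof -
  have "(\<Prod>j\<in>A. h j (\<sigma> j)) =
      (\<Prod>j\<in>{j\<in>A. \<sigma> j = 1}. h j (\<sigma> j)) * (\<Prod>j\<in>A - {j\<in>A. \<sigma> j = 1}. h j (\<sigma> j))"
    using assms(1) by (subst prod.subset_diff[of "{j\<in>A. \<sigma> j = 1}"]) (auto simp: mult.commute)
  also have "\<dots> = (\<Prod>j\<in>{j\<in>A. \<sigma> j = 1}. h j 1) * (\<Prod>j\<in>A - {j\<in>A. \<sigma> j = 1}. h j 0)"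
    using assms(2) by (intro arg_cong2[where f = "(*)"] prod.cong) (auto simp: Pi_iff)
  finally show ?thesis .
qed

lemma sum_Fnk_eq_sum_subsets:
  "(\<Sum>\<sigma>\<in>Fnk n k. \<Prod>j=1..n. h j (\<sigma> j)) =
    (\<Sum>S | S \<subseteq> {1..n} \<and> card S = k. (\<Prod>j\<in>S. h j 1) * (\<Prod>j\<in>{1..n} - S. h j 0))"
proof (rule sum.reindex_bij_witness[where j = "\<lambda>\<sigma>. {j\<in>{1..n}. \<sigma> j = 1}"
      and i = "\<lambda>S. \<lambda>j\<in>{1..n}. if j \<in> S then 1 else 0"])
  fix \<sigma> assume "\<sigma> \<in> Fnk n k"
  then have \<sigma>: "\<sigma> \<in> {1..n} \<rightarrow>\<^sub>E {0, 1}" "card {j\<in>{1..n}. \<sigma> j = 1} = k"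
    by (auto simp: Fnk_def)
  have "\<sigma> j = 0 \<or> \<sigma> j = 1" if "j \<in> {1..n}" for j
    using PiE_mem[OF \<sigma>(1) that] by auto
  then show "(\<lambda>j\<in>{1..n}. if j \<in> {j\<in>{1..n}. \<sigma> j = 1} then 1 else 0) = \<sigma>"
    using PiE_arb[OF \<sigma>(1)] by (intro ext) auto
  show "{j\<in>{1..n}. \<sigma> j = 1} \<in> {S. S \<subseteq> {1..n} \<and> card S = k}"
    using \<sigma>(2) by auto
  show "(\<Prod>j\<in>{j\<in>{1..n}. \<sigma> j = 1}. h j 1) * (\<Prod>j\<in>{1..n} - {j\<in>{1..n}. \<sigma> j = 1}. h j 0) =
      (\<Prod>j=1..n. h j (\<sigma> j))"
    using PiE_mem[OF \<sigma>(1)] by (intro prod_split_zero_one[symmetric]) auto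
next
  fix S assume "S \<in> {S. S \<subseteq> {1..n} \<and> card S = k}"
  then have S: "S \<subseteq> {1..n}" "card S = k" by auto
  have ones: "{j\<in>{1..n}. (\<lambda>j\<in>{1..n}. if j \<in> S then 1 else 0) j = (1::nat)} = S"
    using S(1) by auto
  then show "{j\<in>{1..n}. (\<lambda>j\<in>{1..n}. if j \<in> S then 1 else 0) j = (1::nat)} = S" .
  show "(\<lambda>j\<in>{1..n}. if j \<in> S then 1 else 0) \<in> Fnk n k"
    using ones S(2) by (auto simp: Fnk_def)
qed

lemma sum_nonempty_subsets_by_card:
  assumes "finite A"
  shows "(\<Sum>S\<in>Pow A - {{}}. G S) = (\<Sum>k<card A. \<Sum>S | S \<subseteq> A \<and> card S = Suc k. G S)"
proof -
  have pos: "card S > 0" if "S \<subseteq> A" "S \<noteq> {}" for S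
    using assms that by (auto simp: card_gt_0_iff dest: finite_subset)
  have "card S - 1 < card A" if "S \<subseteq> A" "S \<noteq> {}" for S
    using card_mono[OF assms that(1)] pos[OF that] by linarith
  then have "(\<lambda>S. card S - 1) ` (Pow A - {{}}) \<subseteq> {..<card A}" by auto
  then have "(\<Sum>S\<in>Pow A - {{}}. G S) = (\<Sum>k<card A. \<Sum>S\<in>{S\<in>Pow A - {{}}. card S - 1 = k}. G S)"
    using assms by (intro sum.group[symmetric]) auto
  moreover have "{S\<in>Pow A - {{}}. card S - 1 = k} = {S. S \<subseteq> A \<and> card S = Suc k}" for k
    by (auto dest: pos)
  ultimately show ?thesis by simp
qed

lemma sum_powers_Fnk_eq_sum_subsets:
  fixes h :: "nat \<Rightarrow> nat \<Rightarrow> 'a::comm_ring_1"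
  shows "(\<Sum>k=0..<n. \<Delta> ^ k * (\<Sum>\<sigma>\<in>Fnk n (k + 1). \<Prod>j=1..n. h j (\<sigma> j))) =
    (\<Sum>S\<in>Pow {1..n} - {{}}. \<Delta> ^ (card S - 1) * (\<Prod>j\<in>S. h j 1) * (\<Prod>j\<in>{1..n} - S. h j 0))"
proof -
  define Q where "Q S = (\<Prod>j\<in>S. h j 1) * (\<Prod>j\<in>{1..n} - S. h j 0)" for S
  have "(\<Sum>k=0..<n. \<Delta> ^ k * (\<Sum>\<sigma>\<in>Fnk n (k + 1). \<Prod>j=1..n. h j (\<sigma> j))) =
      (\<Sum>k<n. \<Delta> ^ k * (\<Sum>S | S \<subseteq> {1..n} \<and> card S = Suc k. Q S))"
    unfolding sum_Fnk_eq_sum_subsets atLeast0LessThan Q_def by simp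
  also have "\<dots> = (\<Sum>k<n. \<Sum>S | S \<subseteq> {1..n} \<and> card S = Suc k. \<Delta> ^ (card S - 1) * Q S)"
    by (simp add: sum_distrib_left)
  also have "\<dots> = (\<Sum>S\<in>Pow {1..n} - {{}}. \<Delta> ^ (card S - 1) * Q S)"
    by (subst sum_nonempty_subsets_by_card) auto
  finally show ?thesis by (simp add: Q_def mult.assoc)
qed

subsection \<open>Jumps and intervals of constancy of g\<close>

lemma mono_tendsto_INF_at_right:
  fixes g :: "real \<Rightarrow> real"
  shows "mono g \<Longrightarrow> (g \<longlongrightarrow> (INF s\<in>{p<..}. g s)) (at_right p)"
  using Lim_right_bound[of UNIV p g "g p"] by (simp add: mono_def)

lemma mono_gplus_eq_INF: "mono g \<Longrightarrow> gplus g p = (INF s\<in>{p<..}. g s)"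
  unfolding gplus_def by (intro tendsto_Lim mono_tendsto_INF_at_right) auto

lemma mono_tendsto_gplus: "mono g \<Longrightarrow> (g \<longlongrightarrow> gplus g p) (at_right p)"
  by (simp add: mono_gplus_eq_INF mono_tendsto_INF_at_right)

lemma mono_gplus_ge: "mono g \<Longrightarrow> g p \<le> gplus g p"
  by (simp add: mono_gplus_eq_INF) (auto intro: cINF_greatest simp: mono_def)

lemma mono_not_Dg_iff: "mono g \<Longrightarrow> p \<notin> Dg g \<longleftrightarrow> Delta_g g p = 0"
  using mono_gplus_ge[of g p] by (auto simp: Dg_def Delta_g_def)

lemma mono_not_Dg_tendsto_right:
  assumes "mono g" "p \<notin> Dg g"
  shows "(g \<longlongrightarrow> g p) (at_right p)"
  using mono_tendsto_gplus[OF assms(1), of p] assms by (simp add: mono_not_Dg_iff Delta_g_def)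

lemma gplus_eventually_const:
  fixes g :: "real \<Rightarrow> real"
  shows "\<forall>\<^sub>F s in at_right p. g s = c \<Longrightarrow> gplus g p = c"
  unfolding gplus_def by (intro tendsto_Lim tendsto_eventually) auto

lemma Dg_frequently_ne_right: "p \<in> Dg g \<Longrightarrow> \<exists>\<^sub>F s in at_right p. g s \<noteq> g p"
  using gplus_eventually_const[where g=g and p=p and c="g p"]
  by (auto simp: frequently_def Dg_def Delta_g_def)

lemma Cg_iff_eventually_const: "p \<in> Cg g \<longleftrightarrow> (\<forall>\<^sub>F s in at p. g s = g p)"
proof -
  have ball: "{p-e<..<p+e} = {s. dist s p < e}" for e
    by (auto simp: dist_real_def abs_less_iff)
  have "p \<in> Cg g \<longleftrightarrow> (\<exists>e>0. \<forall>s. dist s p < e \<longrightarrow> g s = g p)"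
    unfolding Cg_def mem_Collect_eq ball by blast
  also have "\<dots> \<longleftrightarrow> (\<exists>e>0. \<forall>s. s \<noteq> p \<and> dist s p < e \<longrightarrow> g s = g p)"
    by (metis (full_types))
  finally show ?thesis by (simp add: eventually_at)
qed

lemma interval_subset_Cg:
  assumes "\<And>s. s \<in> {x<..<y} \<Longrightarrow> g s = c"
  shows "{x<..<y} \<subseteq> Cg g"
proof
  fix s assume s: "s \<in> {x<..<y}"
  have "\<forall>\<^sub>F u in at s. u \<in> {x<..<y}"
    using s by (intro eventually_at_in_open') auto
  then have "\<forall>\<^sub>F u in at s. g u = g s"
    by eventually_elim (metis assms s)
  then show "s \<in> Cg g" by (simp add: Cg_iff_eventually_const)
qed

lemma open_Cg: "open (Cg g)"
proof (rule Topological_Spaces.openI)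
  fix t assume "t \<in> Cg g"
  then obtain e where e: "e > 0" "\<forall>s\<in>{t-e<..<t+e}. g s = g t" unfolding Cg_def by blast
  have "{t-e<..<t+e} \<subseteq> Cg g"
    by (rule interval_subset_Cg[where c="g t"]) (use e(2) in blast)
  with e(1) show "\<exists>T. open T \<and> t \<in> T \<and> T \<subseteq> Cg g"
    by (intro exI[of _ "{t-e<..<t+e}"]) simp
qed

lemma Cg_interval_const:
  assumes "{x<..<y} \<subseteq> Cg g" "u \<in> {x<..<y}" "v \<in> {x<..<y}"
  shows "g u = g v"
proof (rule connected_local_const[of "{x<..<y}" u v g])
  show "\<forall>p\<in>{x<..<y}. \<forall>\<^sub>F q in at p within {x<..<y}. g p = g q"
  proof
    fix p assume "p \<in> {x<..<y}"
    then have "\<forall>\<^sub>F q in at p. g q = g p"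
      using assms(1) by (auto simp: Cg_iff_eventually_const)
    then have "\<forall>\<^sub>F q in at p. g p = g q"
      by (simp add: eq_commute)
    then show "\<forall>\<^sub>F q in at p within {x<..<y}. g p = g q"
      by (rule filter_leD[OF at_le, rotated]) auto
  qed
qed (use assms in auto)

lemma Cg_right_endpoint_eventually_const:
  assumes "(g \<longlongrightarrow> g p) (at_left p)" "x < p" "{x<..<p} \<subseteq> Cg g"
  shows "\<forall>\<^sub>F s in at_left p. g s = g p"
proof -
  define c where "c = g ((x + p) / 2)"
  have mid: "(x + p) / 2 \<in> {x<..<p}" using assms(2) by simp
  have "\<forall>\<^sub>F s in at_left p. s \<in> {x<..<p}" using assms(2) by (rule eventually_at_left_real)
  then have const: "\<forall>\<^sub>F s in at_left p. g s = c"
    by eventually_elim (metis Cg_interval_const assms(3) c_def mid)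
  then have "(g \<longlongrightarrow> c) (at_left p)" by (rule tendsto_eventually)
  with assms(1) have "c = g p" using tendsto_unique trivial_limit_at_left_real by blast
  with const show ?thesis by simp
qed

lemma eventually_const_at_left_imp_Cg:
  assumes "\<forall>\<^sub>F s in at_left p. g s = g p"
  obtains x where "x < p" "{x<..<p} \<subseteq> Cg g"
proof -
  from assms obtain x where x: "x < p" "\<And>s. x < s \<Longrightarrow> s < p \<Longrightarrow> g s = g p"
    by (auto simp: eventually_at_left_field)
  have "{x<..<p} \<subseteq> Cg g"
    by (rule interval_subset_Cg[where c = "g p"]) (simp add: x(2))
  with x(1) show thesis by (rule that)
qed

lemma eventually_const_at_right_imp_Cg:
  assumes "\<forall>\<^sub>F s in at_right p. g s = g p"
  obtains y where "p < y" "{p<..<y} \<subseteq> Cg g"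
proof -
  from assms obtain y where y: "p < y" "\<And>s. p < s \<Longrightarrow> s < y \<Longrightarrow> g s = g p"
    by (auto simp: eventually_at_right_field)
  have "{p<..<y} \<subseteq> Cg g"
    by (rule interval_subset_Cg[where c = "g p"]) (simp add: y(2))
  with y(1) show thesis by (rule that)
qed

lemma Ngp_iff_eventually_const:
  assumes "continuous (at_left p) g"
  shows "p \<in> Ngp g \<longleftrightarrow> p \<notin> Cg g \<and> p \<notin> Dg g \<and> (\<forall>\<^sub>F s in at_left p. g s = g p)"
proof -
  have lim: "(g \<longlongrightarrow> g p) (at_left p)" using assms by (simp add: continuous_within)
  have "(\<exists>x<p. {x<..<p} \<subseteq> Cg g) \<longleftrightarrow> (\<forall>\<^sub>F s in at_left p. g s = g p)"
    using Cg_right_endpoint_eventually_const[OF lim] eventually_const_at_left_imp_Cg[of g p]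
    by metis
  then show ?thesis unfolding Ngp_def by blast
qed

lemma Ngm_if_eventually_const:
  assumes "p \<notin> Cg g" "p \<notin> Dg g" "\<forall>\<^sub>F s in at_right p. g s = g p"
  shows "p \<in> Ngm g"
proof -
  obtain y where "p < y" "{p<..<y} \<subseteq> Cg g"
    using assms(3) by (rule eventually_const_at_right_imp_Cg)
  with assms(1,2) show ?thesis unfolding Ngm_def by blast
qed

lemma not_Cg_eventually_const_left_imp_right:
  "p \<notin> Cg g \<Longrightarrow> \<forall>\<^sub>F s in at_left p. g s = g p \<Longrightarrow> \<exists>\<^sub>F s in at_right p. g s \<noteq> g p"
  by (auto simp: Cg_iff_eventually_const eventually_at_split frequently_def)

lemma frequently_ne_right_if_Dg_Ngp:
  assumes "continuous (at_left p) g" "p \<in> Dg g \<union> Ngp g"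
  shows "\<exists>\<^sub>F s in at_right p. g s \<noteq> g p"
proof (cases "p \<in> Dg g")
  case False
  with assms have "p \<notin> Cg g" "\<forall>\<^sub>F s in at_left p. g s = g p"
    using Ngp_iff_eventually_const[OF assms(1)] by auto
  then show ?thesis by (rule not_Cg_eventually_const_left_imp_right)
qed (rule Dg_frequently_ne_right)

lemma tstar_Cg_component:
  assumes "t \<in> Cg g" "t \<le> b" "b \<notin> Cg g"
  shows "t < tstar g t" "tstar g t \<le> b" "tstar g t \<notin> Cg g" "{t<..<tstar g t} \<subseteq> Cg g"
proof -
  define S where "S = {s. t \<le> s \<and> s \<notin> Cg g}"
  have tstar: "tstar g t = Inf S" using assms(1) by (simp add: tstar_def S_def)
  have "S = {t..} \<inter> - Cg g" by (auto simp: S_def)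
  then have "closed S" using open_Cg[of g] by (simp add: closed_Int closed_Compl)
  moreover have "b \<in> S" and bdd: "bdd_below S"
    using assms(2,3) by (auto simp: S_def bdd_below_def)
  ultimately have "Inf S \<in> S" using closed_contains_Inf by blast
  then show "tstar g t \<notin> Cg g" and "t < tstar g t"
    using assms(1) unfolding tstar S_def by (metis mem_Collect_eq order_le_less)+
  show "tstar g t \<le> b" unfolding tstar using \<open>b \<in> S\<close> bdd by (rule cInf_lower)
  show "{t<..<tstar g t} \<subseteq> Cg g"
  proof
    fix s assume s: "s \<in> {t<..<tstar g t}"
    show "s \<in> Cg g"
    proof (rule ccontr)
      assume "s \<notin> Cg g"
      with s have "s \<in> S" by (simp add: S_def)
      then have "Inf S \<le> s" using bdd by (rule cInf_lower)
      with s show False unfolding tstar by simp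
    qed
  qed
qed

lemma tstar_notin_Cg: "t \<notin> Cg g \<Longrightarrow> tstar g t = t"
  by (simp add: tstar_def)

lemma tstar_in_Dg_Ngp:
  assumes "t \<in> Dg g \<union> Cg g" "t \<le> b" "b \<notin> Cg g"
  shows "tstar g t \<in> Dg g \<union> Ngp g"
proof (cases "t \<in> Cg g")
  case True
  then show ?thesis using tstar_Cg_component[OF True assms(2,3)] unfolding Ngp_def by blast
qed (use assms(1) tstar_notin_Cg in auto)

lemma at_within_nontrivial_if_frequently_right:
  "\<exists>\<^sub>F s in at_right p. s \<in> X \<Longrightarrow> at p within (X \<inter> {p<..}) \<noteq> bot"
  by (simp add: trivial_limit_within islimpt_conv_frequently_at frequently_def
      eventually_at_filter conj_commute)

lemma at_within_nontrivial_if_frequently_left: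
  "\<exists>\<^sub>F s in at_left p. s \<in> X \<Longrightarrow> at p within (X \<inter> {..<p}) \<noteq> bot"
  by (simp add: trivial_limit_within islimpt_conv_frequently_at frequently_def
      eventually_at_filter conj_commute)

lemma at_within_g_ne_right_nontrivial:
  fixes g :: "real \<Rightarrow> real"
  assumes "a \<le> p" "p < b" "\<exists>\<^sub>F s in at_right p. g s \<noteq> g p"
  shows "at p within ({s\<in>{a..b}. g s \<noteq> g p} \<inter> {p<..}) \<noteq> bot"
proof (rule at_within_nontrivial_if_frequently_right)
  have "\<forall>\<^sub>F s in at_right p. s \<in> {a..b}"
    using eventually_at_right_real[OF assms(2)] by eventually_elim (use assms(1) in auto)
  with assms(3) show "\<exists>\<^sub>F s in at_right p. s \<in> {s\<in>{a..b}. g s \<noteq> g p}"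
    by (auto dest: frequently_eventually_frequently elim: frequently_elim1)
qed

lemma at_within_g_ne_left_nontrivial:
  fixes g :: "real \<Rightarrow> real"
  assumes "a < p" "p \<le> b" "\<exists>\<^sub>F s in at_left p. g s \<noteq> g p"
  shows "at p within ({s\<in>{a..b}. g s \<noteq> g p} \<inter> {..<p}) \<noteq> bot"
proof (rule at_within_nontrivial_if_frequently_left)
  have "\<forall>\<^sub>F s in at_left p. s \<in> {a..b}"
    using eventually_at_left_real[OF assms(1)] by eventually_elim (use assms(2) in auto)
  with assms(3) show "\<exists>\<^sub>F s in at_left p. s \<in> {s\<in>{a..b}. g s \<noteq> g p}"
    by (auto dest: frequently_eventually_frequently elim: frequently_elim1)
qed

subsection \<open>The filter of the g-derivative\<close>

definition g_deriv_filter :: "(real \<Rightarrow> real) \<Rightarrow> real \<Rightarrow> real \<Rightarrow> real \<Rightarrow> real filter" where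
  "g_deriv_filter g a b t =
    (if t \<in> Dg g \<union> Cg g then
       at (tstar g t) within ({s\<in>{a..b}. g s \<noteq> g (tstar g t)} \<inter> {tstar g t<..})
     else at t within ({s\<in>{a..b}. g s \<noteq> g t} \<inter>
            (if t \<in> Ngp g \<union> {a} then {t<..}
             else if t \<in> Ngm g \<union> {b} then {..<t} else UNIV)))"

lemma has_g_deriv_iff_tendsto:
  "has_g_deriv g a b f L t \<longleftrightarrow>
    ((\<lambda>s. (f s - f (tstar g t)) / of_real (g s - g (tstar g t))) \<longlongrightarrow> L) (g_deriv_filter g a b t)"
  by (cases "t \<in> Cg g") (simp_all add: has_g_deriv_def g_deriv_filter_def tstar_notin_Cg)

lemma eventually_g_deriv_filter_ne: "\<forall>\<^sub>F s in g_deriv_filter g a b t. g s \<noteq> g (tstar g t)"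
  by (auto simp: g_deriv_filter_def eventually_at_filter tstar_notin_Cg)

locale derivator_interval =
  fixes g :: "real \<Rightarrow> real" and a b :: real
  assumes mono: "mono g"
    and continuous_at_left: "\<And>x. continuous (at_left x) g"
    and less: "a < b"
    and left_end: "a \<notin> Ngm g"
    and right_end: "b \<notin> Dg g \<union> Cg g \<union> Ngp g"
begin

lemma tstar_bounds: "t \<in> {a..b} \<Longrightarrow> t \<le> tstar g t \<and> tstar g t \<le> b \<and> tstar g t \<notin> Cg g"
  using tstar_Cg_component[of t g b] tstar_notin_Cg[of t g] right_end by (cases "t \<in> Cg g") auto

lemma tstar_tstar: "t \<in> {a..b} \<Longrightarrow> tstar g (tstar g t) = tstar g t"
  using tstar_bounds tstar_notin_Cg by blast

lemma g_deriv_filter_tstar: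
  assumes "t \<in> {a..b}"
  shows "g_deriv_filter g a b (tstar g t) = g_deriv_filter g a b t"
proof (cases "t \<in> Cg g")
  case True
  have "tstar g t \<in> Dg g \<union> Ngp g"
    using assms right_end True by (intro tstar_in_Dg_Ngp) auto
  with True tstar_bounds[OF assms] show ?thesis
    by (auto simp: g_deriv_filter_def tstar_notin_Cg)
qed (simp add: tstar_notin_Cg)

lemma has_g_deriv_tstar_iff:
  "t \<in> {a..b} \<Longrightarrow> has_g_deriv g a b f L (tstar g t) \<longleftrightarrow> has_g_deriv g a b f L t"
  by (simp add: has_g_deriv_iff_tendsto tstar_tstar g_deriv_filter_tstar)

lemma g_deriv_filter_Dg_Cg_nontrivial:
  assumes "t \<in> {a..b}" "t \<in> Dg g \<union> Cg g"
  shows "g_deriv_filter g a b t \<noteq> bot"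
proof -
  have "tstar g t \<in> Dg g \<union> Ngp g"
    using assms right_end by (intro tstar_in_Dg_Ngp) auto
  then have "tstar g t \<noteq> b" "\<exists>\<^sub>F s in at_right (tstar g t). g s \<noteq> g (tstar g t)"
    using right_end frequently_ne_right_if_Dg_Ngp[OF continuous_at_left] by auto
  moreover have "a \<le> tstar g t" "tstar g t \<le> b"
    using assms(1) tstar_bounds[OF assms(1)] by auto
  ultimately have "at (tstar g t) within ({s\<in>{a..b}. g s \<noteq> g (tstar g t)} \<inter> {tstar g t<..}) \<noteq> bot"
    by (intro at_within_g_ne_right_nontrivial) auto
  with assms(2) show ?thesis unfolding g_deriv_filter_def by simp
qed

lemma g_deriv_filter_nontrivial:
  assumes "t \<in> {a..b}"
  shows "g_deriv_filter g a b t \<noteq> bot"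
proof (cases "t \<in> Dg g \<union> Cg g")
  case True
  with assms show ?thesis by (rule g_deriv_filter_Dg_Cg_nontrivial)
next
  case False
  define X where "X = {s\<in>{a..b}. g s \<noteq> g t}"
  have Ngp_iff: "t \<in> Ngp g \<longleftrightarrow> (\<forall>\<^sub>F s in at_left t. g s = g t)"
    using False Ngp_iff_eventually_const[OF continuous_at_left] by auto
  have right: "\<exists>\<^sub>F s in at_right t. g s \<noteq> g t" if "t \<notin> Ngm g"
    using that False Ngm_if_eventually_const[of t g] by (auto simp: frequently_def)
  \<comment> \<open>On N_g^+ the function g is constant to the left of t, so it must vary to the right;
    at the endpoints the same is ensured by a \<notin> N_g^- and b \<notin> N_g^+.\<close>
  consider "t \<in> Ngp g \<union> {a}" | "t \<notin> Ngp g \<union> {a}" "t \<in> Ngm g \<union> {b}"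
    | "t \<notin> Ngp g \<union> {a}" "t \<notin> Ngm g \<union> {b}"
    by blast
  then show ?thesis
  proof cases
    case 1
    have "t \<noteq> b" using 1 less right_end by auto
    moreover have "\<exists>\<^sub>F s in at_right t. g s \<noteq> g t"
      using 1 left_end right False Ngp_iff not_Cg_eventually_const_left_imp_right[of t g] by auto
    ultimately have "at t within (X \<inter> {t<..}) \<noteq> bot"
      using assms unfolding X_def by (intro at_within_g_ne_right_nontrivial) auto
    with 1 False show ?thesis unfolding g_deriv_filter_def X_def by simp
  next
    case 2
    then have "a < t" "\<exists>\<^sub>F s in at_left t. g s \<noteq> g t"
      using assms Ngp_iff by (auto simp: frequently_def)
    then have "at t within (X \<inter> {..<t}) \<noteq> bot"
      using assms unfolding X_def by (intro at_within_g_ne_left_nontrivial) auto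
    with 2 False show ?thesis unfolding g_deriv_filter_def X_def by simp
  next
    case 3
    then have "at t within (X \<inter> {t<..}) \<noteq> bot"
      using assms right unfolding X_def by (intro at_within_g_ne_right_nontrivial) auto
    moreover have "at t within (X \<inter> {t<..}) \<le> at t within (X \<inter> UNIV)"
      by (rule at_le) auto
    ultimately show ?thesis
      using 3 False unfolding g_deriv_filter_def X_def by (auto simp: bot_unique)
  qed
qed

lemma tendsto_g_deriv_filter: "(g \<longlongrightarrow> gplus g (tstar g t)) (g_deriv_filter g a b t)"
proof (cases "t \<in> Dg g \<union> Cg g")
  case True
  then show ?thesis
    using mono_tendsto_gplus[OF mono, of "tstar g t"]
    unfolding g_deriv_filter_def by (auto elim: tendsto_within_subset)
next
  case False
  then have "(g \<longlongrightarrow> g t) (at_right t)" "gplus g t = g t"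
    using mono_not_Dg_tendsto_right[OF mono] mono_not_Dg_iff[OF mono]
    by (auto simp: Delta_g_def)
  moreover have "(g \<longlongrightarrow> g t) (at_left t)"
    using continuous_at_left[of t] by (simp add: continuous_within)
  ultimately have "(g \<longlongrightarrow> gplus g t) (at t)"
    by (simp add: filterlim_split_at)
  with False show ?thesis
    unfolding g_deriv_filter_def by (auto simp: tstar_notin_Cg elim: tendsto_within_subset)
qed

lemma has_g_deriv_unique:
  "t \<in> {a..b} \<Longrightarrow> has_g_deriv g a b f L t \<Longrightarrow> has_g_deriv g a b f L' t \<Longrightarrow> L = L'"
  using g_deriv_filter_nontrivial tendsto_unique unfolding has_g_deriv_iff_tendsto by blast

lemma g_deriv_eqI: "t \<in> {a..b} \<Longrightarrow> has_g_deriv g a b f L t \<Longrightarrow> g_deriv g a b f t = L"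
  unfolding g_deriv_def using has_g_deriv_unique by blast

lemma has_g_deriv_g_deriv_tstar:
  assumes "t \<in> {a..b}" "g_differentiable g a b f t"
  shows "has_g_deriv g a b f (g_deriv g a b f (tstar g t)) t"
proof -
  obtain L where L: "has_g_deriv g a b f L t"
    using assms(2) by (auto simp: g_differentiable_def)
  have "tstar g t \<in> {a..b}" using assms(1) tstar_bounds[OF assms(1)] by auto
  then have "g_deriv g a b f (tstar g t) = L"
    by (rule g_deriv_eqI) (simp add: has_g_deriv_tstar_iff[OF assms(1)] L)
  with L show ?thesis by simp
qed

lemma has_g_deriv_prod:
  fixes f :: "'i \<Rightarrow> real \<Rightarrow> 'a::real_normed_field"
  assumes "finite A" "\<And>j. j \<in> A \<Longrightarrow> has_g_deriv g a b (f j) (L j) t"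
  shows "has_g_deriv g a b (\<lambda>s. \<Prod>j\<in>A. f j s)
    (\<Sum>S\<in>Pow A - {{}}. of_real (Delta_g g (tstar g t)) ^ (card S - 1) *
       (\<Prod>j\<in>S. L j) * (\<Prod>j\<in>A - S. f j (tstar g t))) t"
  unfolding has_g_deriv_iff_tendsto
proof (rule tendsto_prod_difference_quotient[where D = "\<lambda>s. of_real (g s - g (tstar g t))"])
  show "((\<lambda>s. of_real (g s - g (tstar g t))) \<longlongrightarrow> (of_real (Delta_g g (tstar g t)) :: 'a))
      (g_deriv_filter g a b t)"
    unfolding Delta_g_def by (intro tendsto_of_real tendsto_diff tendsto_g_deriv_filter tendsto_const)
  show "\<forall>\<^sub>F s in g_deriv_filter g a b t. (of_real (g s - g (tstar g t)) :: 'a) \<noteq> 0"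
    using eventually_g_deriv_filter_ne by (rule eventually_mono) simp
qed (use assms in \<open>auto simp: has_g_deriv_iff_tendsto\<close>)

end

theorem proposition2p7:
  fixes g :: "real \<Rightarrow> real" and a b t :: real and n :: nat
    and f :: "nat \<Rightarrow> real \<Rightarrow> 'a::real_normed_field"
  assumes g_mono: "mono g"
    and g_leftcont: "\<And>x. continuous (at_left x) g"
    and ab: "a < b"
    and a_ok: "a \<notin> Ngm g"
    and b_ok: "b \<notin> Dg g \<union> Cg g \<union> Ngp g"
    and n2: "n \<ge> 2"
    and t_in: "t \<in> {a..b}"
    and diff: "\<And>j. j \<in> {1..n} \<Longrightarrow> g_differentiable g a b (f j) t"
  shows "g_differentiable g a b (\<lambda>s. \<Prod>j=1..n. f j s) t \<and>
         g_deriv g a b (\<lambda>s. \<Prod>j=1..n. f j s) t =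
           (\<Sum>k=0..<n. (of_real (Delta_g g (tstar g t)))^k *
              (\<Sum>\<sigma>\<in>Fnk n (k+1). \<Prod>j=1..n. g_deriv_n g a b (f j) (\<sigma> j) (tstar g t)))"
proof -
  interpret derivator_interval g a b
    using assms by unfold_locales
  define T where "T = tstar g t"
  have "has_g_deriv g a b (\<lambda>s. \<Prod>j=1..n. f j s)
      (\<Sum>S\<in>Pow {1..n} - {{}}. of_real (Delta_g g T) ^ (card S - 1) *
         (\<Prod>j\<in>S. g_deriv g a b (f j) T) * (\<Prod>j\<in>{1..n} - S. f j T)) t"
    unfolding T_def using t_in diff by (intro has_g_deriv_prod has_g_deriv_g_deriv_tstar) auto
  moreover have "(\<Sum>k=0..<n. of_real (Delta_g g T) ^ k *
        (\<Sum>\<sigma>\<in>Fnk n (k+1). \<Prod>j=1..n. g_deriv_n g a b (f j) (\<sigma> j) T)) =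
      (\<Sum>S\<in>Pow {1..n} - {{}}. of_real (Delta_g g T) ^ (card S - 1) *
         (\<Prod>j\<in>S. g_deriv g a b (f j) T) * (\<Prod>j\<in>{1..n} - S. f j T))"
    using sum_powers_Fnk_eq_sum_subsets[where h = "\<lambda>j i. g_deriv_n g a b (f j) i T"]
    by (simp add: g_deriv_n_def)
  ultimately show ?thesis
    using g_deriv_eqI[OF t_in] unfolding g_differentiable_def T_def by auto
qed

end
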